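(* Consider the ample-reserves (lending constraint slack) equilibrium conditions with nominal rate $i>0$. If the interest on reserves is set to $i_r=i+\gamma'(\underline r)$, where $\underline r>0$ solves $\gamma'(\underline r)\underline r-\gamma(\underline r)=k$, then consumption in type-2 meetings is efficient: $q_2=q^*$.
   Context: DM preferences: $u,c$ with $u'>0,u''<0$, $c'>0,c''\ge0$, $u(0)=c(0)=0$, $q^*$ solves $u'(q^* )=c'(q^* )$; with buyer bargaining power $\theta\in(0,1]$, the liquidity premium is $\lambda(q)=\theta[u'(q)-c'(q)]/[(1-\theta)u'(q)+\theta c'(q)]$ for $q<q^*$, $\lambda(q^* )=0$, strictly decreasing on $[0,q^* )$. A type-2 buyer (who can pay with cash, deposits and bank notes, but not unsecured credit) consumes $q_2$ with $\lambda(q_2)=i_\ell$ when borrowing from banks. Bank cost functions $\gamma,\eta:[0,\infty)\to[0,\infty)$ twice differentiable with $\gamma',\gamma''>0$, $\eta',\eta''>0$ on $(0,\infty)$, $\gamma(0)=\gamma'(0)=\eta(0)=\eta'(0)=0$; entry cost $k>0$. In the ample-reserves equilibrium the bank's reserves $\tilde r$ and loans $\tilde\ell\ge0$ satisfy $i_d=i_r-\gamma'(\tilde r)$, $i_\ell=\eta'(\tilde\ell)$, $1+i=(1+i_d)(1+i_\ell)$, and $\gamma'(\tilde r)\tilde r-\gamma(\tilde r)+\eta'(\tilde\ell)\tilde\ell-\eta(\tilde\ell)=k$. *)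

theory Defs
  imports Complex_Main
begin

text \<open>Liquidity premium lambda(q) with buyer bargaining power theta, given the
marginal utility u1 = u' and marginal cost c1 = c'.\<close>
definition liq_premium ::
  "real \<Rightarrow> (real \<Rightarrow> real) \<Rightarrow> (real \<Rightarrow> real) \<Rightarrow> real \<Rightarrow> real \<Rightarrow> real" where
  "liq_premium \<theta> u1 c1 qstar q =
     (if q < qstar then \<theta> * (u1 q - c1 q) / ((1 - \<theta>) * u1 q + \<theta> * c1 q) else 0)"

end

theory Submission
  imports Defs
begin

text \<open>With \<open>i\<^sub>r = i + \<gamma>'(r\<^sub>0)\<close>, any bank that lends (\<open>\<ell> > 0\<close>) earns a positive
  lending surplus \<open>\<eta>'(\<ell>)\<ell> - \<eta>(\<ell>)\<close>, so free entry forces its reserve surplus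
  \<open>\<gamma>'(r)r - \<gamma>(r)\<close> below \<open>k\<close>, i.e. \<open>r < r\<^sub>0\<close>. Then \<open>i\<^sub>d > i\<close> and \<open>i\<^sub>\<ell> > 0\<close>, which
  contradicts the Fisher relation \<open>1 + i = (1 + i\<^sub>d)(1 + i\<^sub>\<ell>)\<close>. Hence \<open>i\<^sub>\<ell> = 0\<close>, and since
  the liquidity premium is positive below \<open>q*\<close>, type-2 buyers consume \<open>q*\<close>.\<close>

lemma DERIV_pos_imp_strict_mono_on_nonneg:
  fixes f f' :: "real \<Rightarrow> real"
  assumes deriv: "\<And>x. x \<ge> 0 \<Longrightarrow> (f has_real_derivative f' x) (at x within {0..})"
    and pos: "\<And>x. x > 0 \<Longrightarrow> f' x > 0"
  shows "strict_mono_on {0..} f"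
proof (rule strict_mono_onI)
  fix a b :: real
  assume "a \<in> {0..}" "a < b"
  then have a: "0 \<le> a" "a < b" by auto
  show "f a < f b"
  proof (rule DERIV_pos_imp_increasing_open[OF \<open>a < b\<close>])
    fix x assume x: "a < x" "x < b"
    then have "(f has_real_derivative f' x) (at x within {0<..})"
      using deriv[of x] a by (auto intro: DERIV_subset)
    then have "(f has_real_derivative f' x) (at x)"
      using at_within_open[of x "{0<..}"] x a by simp
    then show "\<exists>y. (f has_real_derivative y) (at x) \<and> 0 < y"
      using pos[of x] x a by auto
  next
    have "continuous_on {0..} f"
      unfolding continuous_on_eq_continuous_within using deriv DERIV_continuous by blast
    then show "continuous_on {a..b} f"
      by (rule continuous_on_subset) (use a in auto)
  qed
qed

lemma surplus_strict_mono_on_nonneg: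
  fixes f f1 f2 :: "real \<Rightarrow> real"
  assumes d1: "\<And>x. x \<ge> 0 \<Longrightarrow> (f has_real_derivative f1 x) (at x within {0..})"
    and d2: "\<And>x. x \<ge> 0 \<Longrightarrow> (f1 has_real_derivative f2 x) (at x within {0..})"
    and convex: "\<And>x. x > 0 \<Longrightarrow> f2 x > 0"
  shows "strict_mono_on {0..} (\<lambda>x. f1 x * x - f x)"
proof (rule DERIV_pos_imp_strict_mono_on_nonneg)
  fix x :: real
  assume "x \<ge> 0"
  then show "((\<lambda>x. f1 x * x - f x) has_real_derivative f2 x * x) (at x within {0..})"
    using d1 d2 by (auto intro!: derivative_eq_intros)
qed (simp add: convex)

lemma ample_reserves_no_lending:
  fixes \<gamma> \<gamma>1 \<gamma>2 \<eta> \<eta>1 \<eta>2 :: "real \<Rightarrow> real"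
    and k i r_low r l :: real
  assumes g_d1: "\<And>x. x \<ge> 0 \<Longrightarrow> (\<gamma> has_real_derivative \<gamma>1 x) (at x within {0..})"
    and g_d2: "\<And>x. x \<ge> 0 \<Longrightarrow> (\<gamma>1 has_real_derivative \<gamma>2 x) (at x within {0..})"
    and e_d1: "\<And>x. x \<ge> 0 \<Longrightarrow> (\<eta> has_real_derivative \<eta>1 x) (at x within {0..})"
    and e_d2: "\<And>x. x \<ge> 0 \<Longrightarrow> (\<eta>1 has_real_derivative \<eta>2 x) (at x within {0..})"
    and g_conv: "\<And>x. x > 0 \<Longrightarrow> \<gamma>2 x > 0"
    and e_conv: "\<And>x. x > 0 \<Longrightarrow> \<eta>2 x > 0"
    and e_pos: "\<And>x. x > 0 \<Longrightarrow> \<eta>1 x > 0"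
    and e0: "\<eta> 0 = 0" "\<eta>1 0 = 0"
    and i_pos: "i > 0"
    and r_low: "r_low > 0" "\<gamma>1 r_low * r_low - \<gamma> r_low = k"
    and r: "r \<ge> 0" and l: "l \<ge> 0"
    and fisher: "1 + i = (1 + (i + \<gamma>1 r_low - \<gamma>1 r)) * (1 + \<eta>1 l)"
    and entry: "\<gamma>1 r * r - \<gamma> r + (\<eta>1 l * l - \<eta> l) = k"
  shows "l = 0"
proof (rule ccontr)
  assume "l \<noteq> 0"
  with l have l_pos: "l > 0" by simp
  have "\<eta>1 0 * 0 - \<eta> 0 < \<eta>1 l * l - \<eta> l"
    using strict_mono_onD[OF surplus_strict_mono_on_nonneg[OF e_d1 e_d2 e_conv], of 0 l] l_pos
    by simp
  then have lending_surplus: "\<eta>1 l * l - \<eta> l > 0" using e0 by simp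
  have "r < r_low"
  proof (rule ccontr)
    assume "\<not> r < r_low"
    then have "\<gamma>1 r_low * r_low - \<gamma> r_low \<le> \<gamma>1 r * r - \<gamma> r"
      using strict_mono_onD[OF surplus_strict_mono_on_nonneg[OF g_d1 g_d2 g_conv], of r_low r]
        r_low(1) by (cases "r = r_low") auto
    then show False using entry r_low(2) lending_surplus by linarith
  qed
  then have "\<gamma>1 r < \<gamma>1 r_low"
    using strict_mono_onD[OF DERIV_pos_imp_strict_mono_on_nonneg[OF g_d2 g_conv]] r by simp
  then have "(1 + i) * 1 < (1 + (i + \<gamma>1 r_low - \<gamma>1 r)) * (1 + \<eta>1 l)"
    using i_pos e_pos[OF l_pos] by (intro mult_strict_mono) auto
  then show False using fisher by simp
qed

lemma liq_premium_pos:
  fixes u1 u2 c1 c2 :: "real \<Rightarrow> real"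
    and \<theta> qstar q :: real
  assumes u_d2: "\<And>q. q \<ge> 0 \<Longrightarrow> (u1 has_real_derivative u2 q) (at q within {0..})"
    and c_d2: "\<And>q. q \<ge> 0 \<Longrightarrow> (c1 has_real_derivative c2 q) (at q within {0..})"
    and u_pos: "\<And>q. q > 0 \<Longrightarrow> u1 q > 0"
    and u_conc: "\<And>q. q > 0 \<Longrightarrow> u2 q < 0"
    and c_pos: "\<And>q. q > 0 \<Longrightarrow> c1 q > 0"
    and c_conv: "\<And>q. q > 0 \<Longrightarrow> c2 q \<ge> 0"
    and qstar: "u1 qstar = c1 qstar"
    and theta: "0 < \<theta>" "\<theta> \<le> 1"
    and q: "0 < q" "q < qstar"
  shows "liq_premium \<theta> u1 c1 qstar q > 0"
proof -
  have "strict_mono_on {0..} (\<lambda>x. c1 x - u1 x)"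
    by (rule DERIV_pos_imp_strict_mono_on_nonneg[where f' = "\<lambda>x. c2 x - u2 x"])
       (use c_d2 u_d2 c_conv u_conc in \<open>auto intro!: derivative_eq_intros, fastforce\<close>)
  then have "c1 q - u1 q < c1 qstar - u1 qstar"
    using strict_mono_onD q by fastforce
  then have gains: "u1 q - c1 q > 0" using qstar by simp
  have "(1 - \<theta>) * u1 q + \<theta> * c1 q > 0"
    using u_pos[OF q(1)] c_pos[OF q(1)] theta
    by (smt (verit) mult_nonneg_nonneg mult_pos_pos)
  then show ?thesis
    unfolding liq_premium_def using q gains theta by auto
qed

theorem proposition3:
  fixes u c u1 u2 c1 c2 :: "real \<Rightarrow> real"
    and \<gamma> \<gamma>1 \<gamma>2 \<eta> \<eta>1 \<eta>2 :: "real \<Rightarrow> real"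
    and \<theta> k qstar q2 i i_r i_d i_l r_tilde l_tilde r_low :: real
  assumes u_d1: "\<And>q. q \<ge> 0 \<Longrightarrow> (u has_real_derivative u1 q) (at q within {0..})"
    and u_d2: "\<And>q. q \<ge> 0 \<Longrightarrow> (u1 has_real_derivative u2 q) (at q within {0..})"
    and c_d1: "\<And>q. q \<ge> 0 \<Longrightarrow> (c has_real_derivative c1 q) (at q within {0..})"
    and c_d2: "\<And>q. q \<ge> 0 \<Longrightarrow> (c1 has_real_derivative c2 q) (at q within {0..})"
    and u_pos: "\<And>q. q > 0 \<Longrightarrow> u1 q > 0"
    and u_conc: "\<And>q. q > 0 \<Longrightarrow> u2 q < 0"
    and c_pos: "\<And>q. q > 0 \<Longrightarrow> c1 q > 0"
    and c_conv: "\<And>q. q > 0 \<Longrightarrow> c2 q \<ge> 0"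
    and u0: "u 0 = 0" and c0: "c 0 = 0"
    and qstar_pos: "qstar > 0" and qstar: "u1 qstar = c1 qstar"
    and theta: "0 < \<theta>" "\<theta> \<le> 1"
    and g_d1: "\<And>x. x \<ge> 0 \<Longrightarrow> (\<gamma> has_real_derivative \<gamma>1 x) (at x within {0..})"
    and g_d2: "\<And>x. x \<ge> 0 \<Longrightarrow> (\<gamma>1 has_real_derivative \<gamma>2 x) (at x within {0..})"
    and e_d1: "\<And>x. x \<ge> 0 \<Longrightarrow> (\<eta> has_real_derivative \<eta>1 x) (at x within {0..})"
    and e_d2: "\<And>x. x \<ge> 0 \<Longrightarrow> (\<eta>1 has_real_derivative \<eta>2 x) (at x within {0..})"
    and g_nonneg: "\<And>x. x \<ge> 0 \<Longrightarrow> \<gamma> x \<ge> 0"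
    and e_nonneg: "\<And>x. x \<ge> 0 \<Longrightarrow> \<eta> x \<ge> 0"
    and g_pos: "\<And>x. x > 0 \<Longrightarrow> \<gamma>1 x > 0 \<and> \<gamma>2 x > 0"
    and e_pos: "\<And>x. x > 0 \<Longrightarrow> \<eta>1 x > 0 \<and> \<eta>2 x > 0"
    and g0: "\<gamma> 0 = 0" "\<gamma>1 0 = 0"
    and e0: "\<eta> 0 = 0" "\<eta>1 0 = 0"
    and k_pos: "k > 0"
    and i_pos: "i > 0"
    and r_low: "r_low > 0" "\<gamma>1 r_low * r_low - \<gamma> r_low = k"
    and i_r: "i_r = i + \<gamma>1 r_low"
    and eq_r: "r_tilde \<ge> 0" and eq_l: "l_tilde \<ge> 0"
    and eq_d: "i_d = i_r - \<gamma>1 r_tilde"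
    and eq_il: "i_l = \<eta>1 l_tilde"
    and eq_fisher: "1 + i = (1 + i_d) * (1 + i_l)"
    and eq_entry: "\<gamma>1 r_tilde * r_tilde - \<gamma> r_tilde + \<eta>1 l_tilde * l_tilde - \<eta> l_tilde = k"
    and q2_dom: "0 < q2" "q2 \<le> qstar"
    and q2_eq: "liq_premium \<theta> u1 c1 qstar q2 = i_l"
  shows "q2 = qstar"
proof -
  have "l_tilde = 0"
  proof (rule ample_reserves_no_lending[OF g_d1 g_d2 e_d1 e_d2 _ _ _ e0 i_pos r_low eq_r eq_l])
    show "1 + i = (1 + (i + \<gamma>1 r_low - \<gamma>1 r_tilde)) * (1 + \<eta>1 l_tilde)"
      using eq_fisher eq_d i_r eq_il by simp
    show "\<gamma>1 r_tilde * r_tilde - \<gamma> r_tilde + (\<eta>1 l_tilde * l_tilde - \<eta> l_tilde) = k"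
      using eq_entry by simp
  qed (use g_pos e_pos in auto)
  then have no_premium: "liq_premium \<theta> u1 c1 qstar q2 = 0"
    using q2_eq eq_il e0 by simp
  show ?thesis
  proof (rule ccontr)
    assume "q2 \<noteq> qstar"
    with q2_dom have "q2 < qstar" by simp
    then have "liq_premium \<theta> u1 c1 qstar q2 > 0"
      using liq_premium_pos[OF u_d2 c_d2 u_pos u_conc c_pos c_conv qstar theta q2_dom(1)]
      by simp
    with no_premium show False by simp
  qed
qed

end
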